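(* There exist infinitely many (combinatorially distinct) triangulations of $S^2$ which cannot be realized as the Delaunay triangulation, with respect to the cone points, of any Euclidean metric on $S^2$ with positively curved cone points.
   Context: A Euclidean metric on $S^2$ with cone points is a flat metric away from finitely many points, near each of which it is a Euclidean cone of some cone angle; a cone point is positively curved if its cone angle is less than $2\pi$. A triangulation $T$ is realized as the Delaunay triangulation with respect to the cone points if the vertex set corresponds to the set of distinguished points containing the cone points and $T$ is combinatorially equivalent to the Delaunay triangulation of the metric with respect to these points (a geodesic triangulation in which, for each edge $AB$ lying in triangles $ABC$ and $ABD$, the sum of the angles at $C$ and $D$ is at most $\pi$). *)

theory Defs
  imports Complex_Main
begin

text \<open>A (combinatorial) triangulation is given by its set of faces; each face is a
  3-element set of vertices (vertices are natural numbers).\<close>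

type_synonym triangulation = "nat set set"

definition verts :: "triangulation \<Rightarrow> nat set" where
  "verts T = \<Union>T"

definition edges :: "triangulation \<Rightarrow> nat set set" where
  "edges T = {e. card e = 2 \<and> (\<exists>F\<in>T. e \<subseteq> F)}"

definition graph_connected :: "nat set \<Rightarrow> nat set set \<Rightarrow> bool" where
  "graph_connected W E \<longleftrightarrow>
     (\<forall>x\<in>W. \<forall>y\<in>W. (\<lambda>a b. {a, b} \<in> E)\<^sup>*\<^sup>* x y)"

definition vlink :: "triangulation \<Rightarrow> nat \<Rightarrow> nat set set" where
  "vlink T v = {F - {v} | F. F \<in> T \<and> v \<in> F}"

text \<open>A triangulation of the 2-sphere: a finite pure 2-dimensional simplicial complex
  in which every edge lies in exactly two faces and every vertex link is a (connected)
  cycle, i.e. a closed combinatorial surface, which is connected and has Euler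
  characteristic 2.\<close>
definition sphere_triangulation :: "triangulation \<Rightarrow> bool" where
  "sphere_triangulation T \<longleftrightarrow>
     finite T \<and> T \<noteq> {} \<and>
     (\<forall>F\<in>T. card F = 3) \<and>
     (\<forall>e\<in>edges T. card {F\<in>T. e \<subseteq> F} = 2) \<and>
     (\<forall>v\<in>verts T. graph_connected (\<Union>(vlink T v)) (vlink T v)) \<and>
     graph_connected (verts T) (edges T) \<and>
     int (card (verts T)) - int (card (edges T)) + int (card T) = 2"

definition comb_equiv :: "triangulation \<Rightarrow> triangulation \<Rightarrow> bool" where
  "comb_equiv T T' \<longleftrightarrow>
     (\<exists>f. bij_betw f (verts T) (verts T') \<and> (\<lambda>F. f ` F) ` T = T')"

text \<open>Euclidean angle at vertex v of the Euclidean triangle F with edge lengths l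
  (law of cosines).\<close>
definition face_angle :: "(nat set \<Rightarrow> real) \<Rightarrow> nat set \<Rightarrow> nat \<Rightarrow> real" where
  "face_angle l F v =
     arccos (((\<Sum>x\<in>F - {v}. (l {v, x})\<^sup>2) - (l (F - {v}))\<^sup>2)
             / (2 * (\<Prod>x\<in>F - {v}. l {v, x})))"

definition cone_angle :: "triangulation \<Rightarrow> (nat set \<Rightarrow> real) \<Rightarrow> nat \<Rightarrow> real" where
  "cone_angle T l v = (\<Sum>F\<in>{F\<in>T. v \<in> F}. face_angle l F v)"

text \<open>T is realized as the Delaunay triangulation (w.r.t. the cone points) of a Euclidean
  cone metric on the sphere all of whose cone points are positively curved:
  there is a Euclidean cone metric with a geodesic triangulation combinatorially equal
  to T, i.e. an assignment of edge lengths making every face a non-degenerate Euclidean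
  triangle; all vertices have cone angle at most 2 pi (cone points have angle < 2 pi,
  the other distinguished points have angle 2 pi), and the Delaunay condition holds:
  for every edge, the two angles opposite to it sum to at most pi.\<close>
definition delaunay_realizable :: "triangulation \<Rightarrow> bool" where
  "delaunay_realizable T \<longleftrightarrow>
     (\<exists>l :: nat set \<Rightarrow> real.
        (\<forall>e\<in>edges T. 0 < l e) \<and>
        (\<forall>F\<in>T. \<forall>x\<in>F. l (F - {x}) < (\<Sum>y\<in>F - {x}. l {x, y})) \<and>
        (\<forall>v\<in>verts T. cone_angle T l v \<le> 2 * pi) \<and>
        (\<forall>e\<in>edges T.
           (\<Sum>F\<in>{F\<in>T. e \<subseteq> F}. \<Sum>w\<in>F - e. face_angle l F w) \<le> pi))"

end

theory Submission
  imports Defs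
begin

text \<open>
  In a triangulation with a Euclidean metric the angles of each face add up to \<open>\<pi>\<close>.
  If all cone angles are at most \<open>2\<pi>\<close>, the angles at the vertices of a set \<open>R\<close> add up
  to at most \<open>2\<pi> |R|\<close>; if every angle at a vertex outside \<open>R\<close> is opposite to an edge of
  a set \<open>S\<close>, the Delaunay condition bounds the remaining angles by \<open>\<pi> |S|\<close>. So a Delaunay
  realizable triangulation has at most \<open>|S| + 2 |R|\<close> faces.

  Subdividing every face of a sphere triangulation with \<open>V\<close> vertices and \<open>F\<close> faces by a new
  vertex gives \<open>3 F\<close> faces; for \<open>R\<close> the old vertices and \<open>S\<close> the old edges, Euler's
  formula gives \<open>|S| + 2 |R| = 3 V + F - 2\<close>, which is less than \<open>3 F\<close> once \<open>3 V < 2 F + 2\<close>.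
  Stacked spheres with at least seven vertices satisfy this, and subdividing them gives
  triangulations with pairwise different numbers of vertices.
\<close>

lemma card_ge_2_obtain_other:
  assumes "2 \<le> card F"
  obtains x where "x \<in> F" "x \<noteq> y"
proof -
  have "\<not> F \<subseteq> {y}"
    using card_mono[of "{y}" F] assms by auto
  then show thesis
    using that by blast
qed

lemma card_3_split:
  assumes "card F = 3" "x \<in> F" "y \<in> F" "x \<noteq> y"
  obtains z where "F = {x, y, z}" "z \<noteq> x" "z \<noteq> y"
proof -
  have "card (F - {x, y}) = 1"
    using assms by (simp add: card_Diff_subset)
  then obtain z where z: "F - {x, y} = {z}"
    by (auto simp: card_1_singleton_iff)
  then have "F = {x, y, z}"
    using assms(2,3) by auto
  then show thesis
    using that z by auto
qed

lemma card_3_obtain_others: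
  assumes "card F = 3" "x \<in> F"
  obtains y z where "F = {x, y, z}" "x \<noteq> y" "x \<noteq> z" "y \<noteq> z"
proof -
  obtain y where "y \<in> F" "y \<noteq> x"
    using card_ge_2_obtain_other[of F] assms(1) by auto
  then show thesis
    using card_3_split[OF assms] that by metis
qed

lemma card_3_pair_complement:
  assumes "card F = 3" "e \<subseteq> F" "card e = 2"
  obtains x where "x \<in> F" "e = F - {x}"
proof -
  obtain x y where "e = {x, y}" "x \<noteq> y"
    using assms(3) by (auto simp: card_2_iff)
  moreover obtain z where "F = {x, y, z}" "z \<noteq> x" "z \<noteq> y"
    using card_3_split assms(1,2) calculation by (metis insert_subset)
  ultimately have "z \<in> F" "e = F - {z}"
    by auto
  then show thesis
    using that by blast
qed

section \<open>Angles of Euclidean triangles\<close>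

lemma arccos_add_arccos:
  fixes p q :: real
  assumes "\<bar>p\<bar> \<le> 1" "\<bar>q\<bar> \<le> 1" "0 \<le> p + q"
  shows "arccos p + arccos q = arccos (p * q - sqrt (1 - p\<^sup>2) * sqrt (1 - q\<^sup>2))"
proof -
  have "arccos q \<le> arccos (- p)"
    using assms by (intro arccos_le_arccos) auto
  also have "\<dots> = pi - arccos p"
    using assms by (simp add: arccos_minus)
  finally have "arccos p + arccos q \<le> pi"
    by simp
  moreover have "0 \<le> arccos p + arccos q"
    using assms by (simp add: arccos_lbound)
  moreover have "cos (arccos p + arccos q) = p * q - sqrt (1 - p\<^sup>2) * sqrt (1 - q\<^sup>2)"
    using assms by (simp add: cos_add sin_arccos)
  ultimately show ?thesis
    by (metis arccos_cos)
qed

definition triangle_cosine :: "real \<Rightarrow> real \<Rightarrow> real \<Rightarrow> real" where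
  "triangle_cosine a b c = (a\<^sup>2 + b\<^sup>2 - c\<^sup>2) / (2 * a * b)"

definition triangle_angle :: "real \<Rightarrow> real \<Rightarrow> real \<Rightarrow> real" where
  "triangle_angle a b c = arccos (triangle_cosine a b c)"

lemma triangle_angle_commute: "triangle_angle a b c = triangle_angle b a c"
  unfolding triangle_angle_def triangle_cosine_def by (simp add: ac_simps)

lemma abs_triangle_cosine_le:
  fixes a b c :: real
  assumes "0 < a" "0 < b" "\<bar>a - b\<bar> \<le> c" "c \<le> a + b"
  shows "\<bar>triangle_cosine a b c\<bar> \<le> 1"
proof -
  have "(a - b)\<^sup>2 \<le> c\<^sup>2"
    using assms(3) by (metis abs_le_square_iff abs_of_nonneg order.trans abs_ge_zero)
  moreover have "c\<^sup>2 \<le> (a + b)\<^sup>2"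
    using assms by (intro power_mono) auto
  ultimately have "\<bar>a\<^sup>2 + b\<^sup>2 - c\<^sup>2\<bar> \<le> 2 * a * b"
    by (simp add: power2_eq_square algebra_simps abs_le_iff)
  then show ?thesis
    unfolding triangle_cosine_def using assms by (simp add: abs_mult)
qed

lemma triangle_angle_nonneg:
  assumes "0 < a" "0 < b" "\<bar>a - b\<bar> \<le> c" "c \<le> a + b"
  shows "0 \<le> triangle_angle a b c"
  unfolding triangle_angle_def
  using abs_le_D1[OF abs_triangle_cosine_le[OF assms]] abs_le_D2[OF abs_triangle_cosine_le[OF assms]]
  by (intro arccos_lbound) linarith+

lemma triangle_cosine_add_nonneg:
  fixes a b c :: real
  assumes "0 < a" "0 < b" "0 < c" "\<bar>a - b\<bar> \<le> c"
  shows "0 \<le> triangle_cosine b c a + triangle_cosine a c b"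
proof -
  have "triangle_cosine b c a + triangle_cosine a c b = (a + b) * (c\<^sup>2 - (a - b)\<^sup>2) / (2 * a * b * c)"
    unfolding triangle_cosine_def using assms
    by (simp add: field_simps power2_eq_square, (simp add: algebra_simps)?)
  moreover have "(a - b)\<^sup>2 \<le> c\<^sup>2"
    using assms by (intro abs_le_square_iff[THEN iffD1]) auto
  ultimately show ?thesis
    using assms by simp
qed

text \<open>With \<open>\<alpha>, \<beta>, \<gamma>\<close> the angles opposite \<open>a, b, c\<close>, this is
  \<open>sin \<alpha> sin \<beta> = cos \<alpha> cos \<beta> + cos \<gamma>\<close>, i.e. \<open>cos (\<alpha> + \<beta>) = - cos \<gamma>\<close>;
  both sides equal \<open>K / (4 a b c\<^sup>2)\<close>, where \<open>K\<close> is sixteen times the squared area.\<close>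
lemma triangle_sines_product:
  fixes a b c :: real
  assumes "0 < a" "0 < b" "0 < c" "a < b + c" "b < a + c" "c < a + b"
  shows "sqrt (1 - (triangle_cosine b c a)\<^sup>2) * sqrt (1 - (triangle_cosine a c b)\<^sup>2)
    = triangle_cosine b c a * triangle_cosine a c b + triangle_cosine a b c"
proof -
  define K where "K = (a + b + c) * (- a + b + c) * (a - b + c) * (a + b - c)"
  have "0 < K"
    unfolding K_def using assms by (intro mult_pos_pos) auto
  have "1 - (triangle_cosine b c a)\<^sup>2 = K / (2 * b * c)\<^sup>2"
    "1 - (triangle_cosine a c b)\<^sup>2 = K / (2 * a * c)\<^sup>2"
    unfolding triangle_cosine_def K_def using assms
    by (simp_all add: field_simps power2_eq_square, (simp_all add: algebra_simps)?)
  then have "sqrt (1 - (triangle_cosine b c a)\<^sup>2) = sqrt K / (2 * b * c)"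
    "sqrt (1 - (triangle_cosine a c b)\<^sup>2) = sqrt K / (2 * a * c)"
    using assms by (simp_all add: real_sqrt_divide)
  then have "sqrt (1 - (triangle_cosine b c a)\<^sup>2) * sqrt (1 - (triangle_cosine a c b)\<^sup>2)
      = (sqrt K * sqrt K) / (4 * a * b * c\<^sup>2)"
    by (simp add: power2_eq_square)
  also have "\<dots> = K / (4 * a * b * c\<^sup>2)"
    using \<open>0 < K\<close> by simp
  also have "\<dots> = triangle_cosine b c a * triangle_cosine a c b + triangle_cosine a b c"
    unfolding triangle_cosine_def K_def using assms
    by (simp add: field_simps power2_eq_square, (simp add: algebra_simps)?)
  finally show ?thesis .
qed

lemma triangle_angle_sum:
  fixes a b c :: real
  assumes "0 < a" "0 < b" "0 < c" "a < b + c" "b < a + c" "c < a + b"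
  shows "triangle_angle b c a + triangle_angle a c b + triangle_angle a b c = pi"
proof -
  have bounds: "\<bar>triangle_cosine b c a\<bar> \<le> 1" "\<bar>triangle_cosine a c b\<bar> \<le> 1"
    "\<bar>triangle_cosine a b c\<bar> \<le> 1"
    by (rule abs_triangle_cosine_le; use assms in \<open>auto simp: abs_le_iff\<close>)+
  moreover have "0 \<le> triangle_cosine b c a + triangle_cosine a c b"
    using assms by (intro triangle_cosine_add_nonneg) (auto simp: abs_le_iff)
  ultimately have "triangle_angle b c a + triangle_angle a c b = arccos (- triangle_cosine a b c)"
    unfolding triangle_angle_def using arccos_add_arccos triangle_sines_product[OF assms] by simp
  also have "\<dots> = pi - triangle_angle a b c"
    unfolding triangle_angle_def using bounds by (simp add: arccos_minus)
  finally show ?thesis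
    by simp
qed

abbreviation nondegenerate_triangle :: "(nat set \<Rightarrow> real) \<Rightarrow> nat set \<Rightarrow> bool" where
  "nondegenerate_triangle l F \<equiv> \<forall>x\<in>F. l (F - {x}) < (\<Sum>y\<in>F - {x}. l {x, y})"

lemma face_angle_triangle:
  assumes "F = {x, y, z}" "x \<noteq> y" "x \<noteq> z" "y \<noteq> z"
  shows "face_angle l F x = triangle_angle (l {x, y}) (l {x, z}) (l {y, z})"
proof -
  have "F - {x} = {y, z}"
    using assms by auto
  then show ?thesis
    unfolding face_angle_def triangle_angle_def triangle_cosine_def using assms by (simp add: mult.assoc)
qed

lemma face_triangle_inequalities:
  assumes "F = {x, y, z}" "x \<noteq> y" "x \<noteq> z" "y \<noteq> z"
    and "nondegenerate_triangle l F"
  shows "l {y, z} < l {x, y} + l {x, z}" "l {x, z} < l {x, y} + l {y, z}" "l {x, y} < l {x, z} + l {y, z}"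
proof -
  have "F - {x} = {y, z}" "F - {y} = {x, z}" "F - {z} = {x, y}"
    using assms(1-4) by auto
  then show "l {y, z} < l {x, y} + l {x, z}" "l {x, z} < l {x, y} + l {y, z}"
    "l {x, y} < l {x, z} + l {y, z}"
    using assms by (auto simp: insert_commute)
qed

lemma face_angle_nonneg:
  assumes "card F = 3" "x \<in> F" "nondegenerate_triangle l F"
  shows "0 \<le> face_angle l F x"
proof -
  obtain y z where F: "F = {x, y, z}" "x \<noteq> y" "x \<noteq> z" "y \<noteq> z"
    using card_3_obtain_others[OF assms(1,2)] .
  show ?thesis
    unfolding face_angle_triangle[OF F]
    using face_triangle_inequalities[OF F assms(3)] by (intro triangle_angle_nonneg) (auto simp: abs_le_iff)
qed

lemma face_angle_sum:
  assumes "card F = 3" "nondegenerate_triangle l F"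
  shows "(\<Sum>x\<in>F. face_angle l F x) = pi"
proof -
  obtain a b c where F: "F = {a, b, c}" "a \<noteq> b" "a \<noteq> c" "b \<noteq> c"
    using assms(1) unfolding card_3_iff by blast
  define A B C where "A = l {b, c}" and "B = l {a, c}" and "C = l {a, b}"
  have tri: "A < C + B" "B < C + A" "C < B + A"
    unfolding A_def B_def C_def by (fact face_triangle_inequalities[OF F assms(2)])+
  have "F = {b, a, c}" "F = {c, a, b}"
    using F by auto
  then have "face_angle l F a = triangle_angle C B A" "face_angle l F b = triangle_angle C A B"
    "face_angle l F c = triangle_angle B A C"
    unfolding A_def B_def C_def
    using face_angle_triangle[OF F] face_angle_triangle[of F b a c l] face_angle_triangle[of F c a b l] F
    by (simp_all add: insert_commute)
  then have "(\<Sum>x\<in>F. face_angle l F x) = triangle_angle C B A + triangle_angle C A B + triangle_angle B A C"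
    using F by simp
  also have "\<dots> = triangle_angle B C A + triangle_angle A C B + triangle_angle A B C"
    using triangle_angle_commute[of C B A] triangle_angle_commute[of C A B] triangle_angle_commute[of B A C]
    by simp
  also have "\<dots> = pi"
    using tri by (intro triangle_angle_sum) linarith+
  finally show ?thesis .
qed

section \<open>Counting angles in a Delaunay triangulation\<close>

lemma sum_opposite_edges:
  assumes "card F = 3" "\<forall>e\<in>S. card e = 2"
  shows "(\<Sum>e\<in>{e\<in>S. e \<subseteq> F}. \<Sum>w\<in>F - e. g w) = (\<Sum>x\<in>{x\<in>F. F - {x} \<in> S}. g x)"
proof -
  have "inj_on (\<lambda>x. F - {x}) {x\<in>F. F - {x} \<in> S}"
    by (rule inj_onI) blast
  moreover have "{e\<in>S. e \<subseteq> F} = (\<lambda>x. F - {x}) ` {x\<in>F. F - {x} \<in> S}"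
  proof (intro equalityI subsetI)
    fix e assume "e \<in> {e\<in>S. e \<subseteq> F}"
    then obtain x where "x \<in> F" "e = F - {x}"
      using card_3_pair_complement[OF assms(1)] assms(2) by blast
    then show "e \<in> (\<lambda>x. F - {x}) ` {x\<in>F. F - {x} \<in> S}"
      using \<open>e \<in> {e\<in>S. e \<subseteq> F}\<close> by blast
  qed auto
  ultimately have "(\<Sum>e\<in>{e\<in>S. e \<subseteq> F}. \<Sum>w\<in>F - e. g w)
      = (\<Sum>x\<in>{x\<in>F. F - {x} \<in> S}. \<Sum>w\<in>F - (F - {x}). g w)"
    by (simp add: sum.reindex)
  also have "\<dots> = (\<Sum>x\<in>{x\<in>F. F - {x} \<in> S}. g x)"
    by (rule sum.cong) (auto simp: Diff_Diff_Int)
  finally show ?thesis .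
qed

lemma sum_angles_at_le:
  assumes "finite T" "finite R" "R \<subseteq> verts T" "\<forall>v\<in>verts T. cone_angle T l v \<le> 2 * pi"
  shows "(\<Sum>F\<in>T. \<Sum>x\<in>F \<inter> R. face_angle l F x) \<le> 2 * pi * card R"
proof -
  have "(\<Sum>F\<in>T. \<Sum>x\<in>F \<inter> R. face_angle l F x) = (\<Sum>F\<in>T. \<Sum>x\<in>{x\<in>R. x \<in> F}. face_angle l F x)"
    by (intro sum.cong) auto
  also have "\<dots> = (\<Sum>x\<in>R. cone_angle T l x)"
    unfolding cone_angle_def using sum.swap_restrict[OF assms(1,2)] by simp
  also have "\<dots> \<le> (\<Sum>x\<in>R. 2 * pi)"
    using assms(3,4) by (intro sum_mono) auto
  finally show ?thesis
    by (simp add: ac_simps)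
qed

lemma sum_angles_opposite_le:
  assumes "finite T" "\<forall>F\<in>T. card F = 3" "finite S" "S \<subseteq> edges T"
    and opposite: "\<forall>F\<in>T. \<forall>x\<in>F - R. F - {x} \<in> S"
    and tri: "\<forall>F\<in>T. nondegenerate_triangle l F"
    and delaunay: "\<forall>e\<in>edges T. (\<Sum>F\<in>{F\<in>T. e \<subseteq> F}. \<Sum>w\<in>F - e. face_angle l F w) \<le> pi"
  shows "(\<Sum>F\<in>T. \<Sum>x\<in>F - R. face_angle l F x) \<le> pi * card S"
proof -
  have S2: "\<forall>e\<in>S. card e = 2"
    using assms(4) unfolding edges_def by blast
  have "(\<Sum>x\<in>F - R. face_angle l F x) \<le> (\<Sum>e\<in>{e\<in>S. e \<subseteq> F}. \<Sum>w\<in>F - e. face_angle l F w)"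
    if F: "F \<in> T" for F
  proof -
    have "card F = 3"
      using F assms(2) by blast
    have "finite {x\<in>F. F - {x} \<in> S}"
      using \<open>card F = 3\<close> by (simp add: card_ge_0_finite)
    moreover have "F - R \<subseteq> {x\<in>F. F - {x} \<in> S}"
      using opposite F by blast
    moreover have "0 \<le> face_angle l F x" if "x \<in> F" for x
      using face_angle_nonneg[OF \<open>card F = 3\<close> that] F tri by blast
    ultimately have "(\<Sum>x\<in>F - R. face_angle l F x) \<le> (\<Sum>x\<in>{x\<in>F. F - {x} \<in> S}. face_angle l F x)"
      by (intro sum_mono2) auto
    also have "\<dots> = (\<Sum>e\<in>{e\<in>S. e \<subseteq> F}. \<Sum>w\<in>F - e. face_angle l F w)"
      using sum_opposite_edges[OF \<open>card F = 3\<close> S2, of "face_angle l F"] by simp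
    finally show ?thesis .
  qed
  then have "(\<Sum>F\<in>T. \<Sum>x\<in>F - R. face_angle l F x)
      \<le> (\<Sum>F\<in>T. \<Sum>e\<in>{e\<in>S. e \<subseteq> F}. \<Sum>w\<in>F - e. face_angle l F w)"
    by (rule sum_mono)
  also have "\<dots> = (\<Sum>e\<in>S. \<Sum>F\<in>{F\<in>T. e \<subseteq> F}. \<Sum>w\<in>F - e. face_angle l F w)"
    using sum.swap_restrict[OF assms(1,3)] by simp
  also have "\<dots> \<le> (\<Sum>e\<in>S. pi)"
    using delaunay assms(4) by (intro sum_mono) auto
  finally show ?thesis
    by (simp add: mult.commute)
qed

lemma not_delaunay_realizable_angle_count:
  assumes "finite T" "\<forall>F\<in>T. card F = 3" "finite R" "R \<subseteq> verts T" "finite S" "S \<subseteq> edges T"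
    and opposite: "\<forall>F\<in>T. \<forall>x\<in>F - R. F - {x} \<in> S"
    and few: "card S + 2 * card R < card T"
  shows "\<not> delaunay_realizable T"
proof
  assume "delaunay_realizable T"
  then obtain l where
    tri: "\<forall>F\<in>T. nondegenerate_triangle l F" and
    cone: "\<forall>v\<in>verts T. cone_angle T l v \<le> 2 * pi" and
    delaunay: "\<forall>e\<in>edges T. (\<Sum>F\<in>{F\<in>T. e \<subseteq> F}. \<Sum>w\<in>F - e. face_angle l F w) \<le> pi"
    unfolding delaunay_realizable_def by blast
  have "pi * card T = (\<Sum>F\<in>T. \<Sum>x\<in>F. face_angle l F x)"
    using face_angle_sum assms(2) tri by simp
  also have "\<dots> = (\<Sum>F\<in>T. (\<Sum>x\<in>F \<inter> R. face_angle l F x) + (\<Sum>x\<in>F - R. face_angle l F x))"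
    using assms(2) by (intro sum.cong refl sum.Int_Diff) (simp add: card_ge_0_finite)
  also have "\<dots> = (\<Sum>F\<in>T. \<Sum>x\<in>F \<inter> R. face_angle l F x) + (\<Sum>F\<in>T. \<Sum>x\<in>F - R. face_angle l F x)"
    by (rule sum.distrib)
  also have "\<dots> \<le> 2 * pi * card R + pi * card S"
    using sum_angles_at_le[OF assms(1,3,4) cone] sum_angles_opposite_le[OF assms(1,2,5,6) opposite tri delaunay]
    by linarith
  finally have "pi * card T \<le> pi * (card S + 2 * card R)"
    by (simp add: algebra_simps)
  then show False
    using few by simp
qed

section \<open>Stellar subdivision of a face\<close>

lemma graph_connected_complete:
  assumes "\<And>x y. x \<in> W \<Longrightarrow> y \<in> W \<Longrightarrow> x \<noteq> y \<Longrightarrow> {x, y} \<in> E"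
  shows "graph_connected W E"
  unfolding graph_connected_def
  by (metis assms r_into_rtranclp rtranclp.rtrancl_refl)

lemma graph_connected_lift:
  assumes "graph_connected W E"
    and edge: "\<And>x y. {x, y} \<in> E \<Longrightarrow> (\<lambda>a b. {a, b} \<in> E')\<^sup>*\<^sup>* x y"
    and vertex: "\<And>x. x \<in> W' \<Longrightarrow> \<exists>y\<in>W. (\<lambda>a b. {a, b} \<in> E')\<^sup>*\<^sup>* x y"
  shows "graph_connected W' E'"
  unfolding graph_connected_def
proof (intro ballI)
  let ?r = "\<lambda>a b. {a, b} \<in> E'"
  have symmetric: "symp ?r\<^sup>*\<^sup>*"
    by (rule symp_rtranclp) (auto intro: sympI simp: insert_commute)
  have lift: "?r\<^sup>*\<^sup>* x y" if "(\<lambda>a b. {a, b} \<in> E)\<^sup>*\<^sup>* x y" for x y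
    using rtranclp_mono[of "\<lambda>a b. {a, b} \<in> E" "?r\<^sup>*\<^sup>*"] edge that by auto
  fix x y assume "x \<in> W'" "y \<in> W'"
  then obtain x' y' where "x' \<in> W" "?r\<^sup>*\<^sup>* x x'" "y' \<in> W" "?r\<^sup>*\<^sup>* y y'"
    using vertex by blast
  moreover have "?r\<^sup>*\<^sup>* x' y'"
    using lift assms(1) \<open>x' \<in> W\<close> \<open>y' \<in> W\<close> unfolding graph_connected_def by blast
  ultimately show "?r\<^sup>*\<^sup>* x y"
    using symmetric by (meson rtranclp_trans sympD)
qed

lemma sphere_triangulation_finite_verts:
  assumes "sphere_triangulation T"
  shows "finite (verts T)"
  unfolding verts_def
proof (rule finite_Union)
  show "finite T"
    using assms unfolding sphere_triangulation_def by blast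
  show "finite F" if "F \<in> T" for F
  proof -
    have "card F = 3"
      using assms that unfolding sphere_triangulation_def by blast
    then show ?thesis
      by (simp add: card_ge_0_finite)
  qed
qed

lemma sphere_triangulation_finite_edges:
  assumes "sphere_triangulation T"
  shows "finite (edges T)"
proof (rule finite_subset)
  show "edges T \<subseteq> Pow (verts T)"
    unfolding edges_def verts_def by auto
  show "finite (Pow (verts T))"
    using sphere_triangulation_finite_verts[OF assms] by simp
qed

definition stellar :: "triangulation \<Rightarrow> nat set \<Rightarrow> nat \<Rightarrow> triangulation" where
  "stellar T F v = (T - {F}) \<union> (\<lambda>x. insert v (F - {x})) ` F"

locale stellar_subdivision =
  fixes T :: triangulation and F :: "nat set" and v :: nat
  assumes sphere: "sphere_triangulation T" and face: "F \<in> T" and fresh: "v \<notin> verts T"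
begin

abbreviation cone_face :: "nat \<Rightarrow> nat set" where
  "cone_face x \<equiv> insert v (F - {x})"

lemma finite_faces: "finite T"
  and card_face: "G \<in> T \<Longrightarrow> card G = 3"
  and edge_degree: "e \<in> edges T \<Longrightarrow> card {G\<in>T. e \<subseteq> G} = 2"
  and connected_vlink: "w \<in> verts T \<Longrightarrow> graph_connected (\<Union>(vlink T w)) (vlink T w)"
  and connected: "graph_connected (verts T) (edges T)"
  and euler: "int (card (verts T)) - int (card (edges T)) + int (card T) = 2"
  using sphere unfolding sphere_triangulation_def by auto

lemma finite_verts: "finite (verts T)"
  using sphere by (rule sphere_triangulation_finite_verts)

lemma finite_edges: "finite (edges T)"
  using sphere by (rule sphere_triangulation_finite_edges)

lemma fresh_face: "G \<in> T \<Longrightarrow> v \<notin> G"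
  using fresh unfolding verts_def by auto

lemma fresh_edge: "e \<in> edges T \<Longrightarrow> v \<notin> e"
  using fresh unfolding verts_def edges_def by auto

lemma card_F: "card F = 3" and finite_F: "finite F" and fresh_F: "v \<notin> F"
  using card_face[OF face] fresh_face[OF face] by (auto simp: card_ge_0_finite)

lemma inj_cone_face: "inj_on cone_face F"
proof (rule inj_onI)
  fix x y assume "x \<in> F" "y \<in> F" "cone_face x = cone_face y"
  then have "F - {x} = F - {y}"
    using fresh_F by (metis Diff_insert_absorb Diff_iff)
  then show "x = y"
    using \<open>x \<in> F\<close> by blast
qed

lemma cone_face_notin: "cone_face x \<notin> T"
  using fresh_face by blast

lemma card_cone_face: "x \<in> F \<Longrightarrow> card (cone_face x) = 3"
  using card_F finite_F fresh_F by simp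

lemma card_stellar: "card (stellar T F v) = card T + 2"
proof -
  have "card (stellar T F v) = card (T - {F}) + card (cone_face ` F)"
    unfolding stellar_def using finite_faces finite_F cone_face_notin
    by (intro card_Un_disjoint) auto
  also have "\<dots> = card T + 2"
    using card_Diff1_less[OF finite_faces face] card_image[OF inj_cone_face] card_F
    by (simp only: card_Diff_singleton[OF face])
  finally show ?thesis .
qed

lemma verts_stellar: "verts (stellar T F v) = insert v (verts T)"
proof -
  have "F \<noteq> {}"
    using card_F by auto
  moreover have "\<Union>(cone_face ` F) = insert v F"
  proof
    show "\<Union>(cone_face ` F) \<subseteq> insert v F"
      by auto
    show "insert v F \<subseteq> \<Union>(cone_face ` F)"
    proof
      fix y assume "y \<in> insert v F"
      moreover obtain x where "x \<in> F" "x \<noteq> y"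
        using card_ge_2_obtain_other[of F] card_F by auto
      ultimately show "y \<in> \<Union>(cone_face ` F)"
        by auto
    qed
  qed
  ultimately show ?thesis
    unfolding stellar_def verts_def using face by auto
qed

lemma edges_stellar_subset: "edges (stellar T F v) \<subseteq> edges T \<union> (\<lambda>y. {v, y}) ` F"
proof
  fix e assume "e \<in> edges (stellar T F v)"
  then obtain G where e: "card e = 2" "e \<subseteq> G" and G: "G \<in> T - {F} \<or> G \<in> cone_face ` F"
    unfolding edges_def stellar_def by auto
  show "e \<in> edges T \<union> (\<lambda>y. {v, y}) ` F"
  proof (cases "v \<in> e")
    case True
    have "card (e - {v}) = 1"
      using e(1) True by simp
    then obtain y where "e - {v} = {y}"
      by (auto simp: card_1_singleton_iff)
    then have "e = {v, y}"
      using True by blast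
    then show ?thesis
      using G e fresh_face by auto
  next
    case False
    then have "\<exists>G'\<in>T. e \<subseteq> G'"
      using G e(2) face by auto
    then show ?thesis
      using e(1) unfolding edges_def by blast
  qed
qed

lemma edges_subset_stellar: "edges T \<union> (\<lambda>y. {v, y}) ` F \<subseteq> edges (stellar T F v)"
proof
  fix e assume "e \<in> edges T \<union> (\<lambda>y. {v, y}) ` F"
  then consider "e \<in> edges T" | y where "y \<in> F" "e = {v, y}"
    by blast
  then show "e \<in> edges (stellar T F v)"
  proof cases
    case 1
    then obtain G where e: "card e = 2" "e \<subseteq> G" "G \<in> T"
      unfolding edges_def by blast
    show ?thesis
    proof (cases "G = F")
      case True
      then obtain x where "x \<in> F" "e = F - {x}"
        using card_3_pair_complement card_F e by metis
      then show ?thesis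
        using e(1) unfolding edges_def stellar_def by blast
    next
      case False
      then show ?thesis
        using e unfolding edges_def stellar_def by blast
    qed
  next
    case 2
    obtain x where "x \<in> F" "x \<noteq> y"
      using card_ge_2_obtain_other[of F] card_F by auto
    then have "cone_face x \<in> stellar T F v" "{v, y} \<subseteq> cone_face x"
      using 2 unfolding stellar_def by auto
    moreover have "card {v, y} = 2"
      using 2 fresh_F by (metis card_2_iff)
    ultimately show ?thesis
      using 2 unfolding edges_def by blast
  qed
qed

lemma edges_stellar: "edges (stellar T F v) = edges T \<union> (\<lambda>y. {v, y}) ` F"
  using edges_stellar_subset edges_subset_stellar by (rule antisym)

lemma card_edges_stellar: "card (edges (stellar T F v)) = card (edges T) + 3"
proof -
  have "inj_on (\<lambda>y. {v, y}) F"
    by (rule inj_onI) (metis doubleton_eq_iff fresh_F)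
  then have "card ((\<lambda>y. {v, y}) ` F) = 3"
    using card_image card_F by metis
  moreover have "edges T \<inter> (\<lambda>y. {v, y}) ` F = {}"
    using fresh_edge by auto
  ultimately show ?thesis
    unfolding edges_stellar using finite_edges finite_F by (simp add: card_Un_disjoint)
qed

lemma card_faces_containing_stellar:
  "card {G \<in> stellar T F v. e \<subseteq> G} = card ({G\<in>T. e \<subseteq> G} - {F}) + card {x\<in>F. e \<subseteq> cone_face x}"
proof -
  have "{G \<in> stellar T F v. e \<subseteq> G} = ({G\<in>T. e \<subseteq> G} - {F}) \<union> cone_face ` {x\<in>F. e \<subseteq> cone_face x}"
    unfolding stellar_def by auto
  moreover have "card (cone_face ` {x\<in>F. e \<subseteq> cone_face x}) = card {x\<in>F. e \<subseteq> cone_face x}"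
    using inj_cone_face by (auto intro: card_image inj_on_subset)
  moreover have "card (({G\<in>T. e \<subseteq> G} - {F}) \<union> cone_face ` {x\<in>F. e \<subseteq> cone_face x})
      = card ({G\<in>T. e \<subseteq> G} - {F}) + card (cone_face ` {x\<in>F. e \<subseteq> cone_face x})"
    by (rule card_Un_disjoint) (use finite_faces finite_F cone_face_notin in auto)
  ultimately show ?thesis
    by simp
qed

lemma edge_degree_stellar:
  assumes "e \<in> edges (stellar T F v)"
  shows "card {G \<in> stellar T F v. e \<subseteq> G} = 2"
proof -
  consider "e \<in> edges T" | y where "y \<in> F" "e = {v, y}"
    using assms unfolding edges_stellar by blast
  then show ?thesis
  proof cases
    case 1
    then have "v \<notin> e" "card e = 2"
      using fresh_edge unfolding edges_def by auto
    show ?thesis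
    proof (cases "e \<subseteq> F")
      case True
      then obtain x where x: "x \<in> F" "e = F - {x}"
        using card_3_pair_complement card_F \<open>card e = 2\<close> by metis
      then have "{x\<in>F. e \<subseteq> cone_face x} = {x}"
        using \<open>v \<notin> e\<close> by auto
      moreover have "card ({G\<in>T. e \<subseteq> G} - {F}) = 1"
        using edge_degree[OF 1] face True by (simp add: card_Diff_singleton)
      ultimately show ?thesis
        unfolding card_faces_containing_stellar by simp
    next
      case False
      then have "{x\<in>F. e \<subseteq> cone_face x} = {}" "{G\<in>T. e \<subseteq> G} - {F} = {G\<in>T. e \<subseteq> G}"
        using \<open>v \<notin> e\<close> by auto
      then show ?thesis
        unfolding card_faces_containing_stellar by (simp only: edge_degree[OF 1] card.empty)
    qed
  next
    case 2
    then have new: "{x\<in>F. e \<subseteq> cone_face x} = F - {y}" and old: "{G\<in>T. e \<subseteq> G} = {}"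
      using fresh_F fresh_face by auto
    show ?thesis
      unfolding card_faces_containing_stellar new old using card_F \<open>y \<in> F\<close> by simp
  qed
qed

lemma vlink_stellar_apex: "vlink (stellar T F v) v = (\<lambda>x. F - {x}) ` F"
proof -
  have "vlink (stellar T F v) v = (\<lambda>G. G - {v}) ` {G \<in> stellar T F v. v \<in> G}"
    unfolding vlink_def by blast
  also have "{G \<in> stellar T F v. v \<in> G} = cone_face ` F"
    unfolding stellar_def using fresh_face by blast
  finally show ?thesis
    using fresh_F by (simp add: image_image)
qed

lemma connected_vlink_stellar_apex:
  "graph_connected (\<Union>(vlink (stellar T F v) v)) (vlink (stellar T F v) v)"
  unfolding vlink_stellar_apex
proof (rule graph_connected_complete)
  fix x y assume "x \<in> \<Union>((\<lambda>x. F - {x}) ` F)" "y \<in> \<Union>((\<lambda>x. F - {x}) ` F)" "x \<noteq> y"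
  then obtain z where "F = {x, y, z}" "z \<noteq> x" "z \<noteq> y"
    using card_3_split[OF card_F] by blast
  then show "{x, y} \<in> (\<lambda>x. F - {x}) ` F"
    by (intro image_eqI[of _ _ z]) auto
qed

lemma vlink_stellar_away: "w \<notin> insert v F \<Longrightarrow> vlink (stellar T F v) w = vlink T w"
  unfolding vlink_def stellar_def by auto

lemma vlink_stellar_keeps: "G \<in> T \<Longrightarrow> G \<noteq> F \<Longrightarrow> w \<in> G \<Longrightarrow> G - {w} \<in> vlink (stellar T F v) w"
  unfolding vlink_def stellar_def by blast

lemma vlink_stellar_corner_path:
  assumes "F = {w, y, z}" "w \<noteq> y" "w \<noteq> z" "y \<noteq> z"
  shows "{v, y} \<in> vlink (stellar T F v) w"
proof -
  have "cone_face z \<in> stellar T F v" "w \<in> cone_face z"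
    using assms unfolding stellar_def by auto
  moreover have "cone_face z - {w} = {v, y}"
    using assms fresh_F by auto
  ultimately show ?thesis
    unfolding vlink_def by blast
qed

lemma vlink_stellar_corner_verts:
  assumes "w \<in> F"
  shows "\<Union>(vlink (stellar T F v) w) \<subseteq> insert v (\<Union>(vlink T w))"
proof
  fix x assume "x \<in> \<Union>(vlink (stellar T F v) w)"
  then obtain G where G: "G \<in> stellar T F v" "w \<in> G" "x \<in> G" "x \<noteq> w"
    unfolding vlink_def by blast
  have "F - {w} \<in> vlink T w"
    using face assms unfolding vlink_def by blast
  then show "x \<in> insert v (\<Union>(vlink T w))"
    using G unfolding stellar_def vlink_def by blast
qed

lemma connected_vlink_stellar_corner:
  assumes "w \<in> F"
  shows "graph_connected (\<Union>(vlink (stellar T F v) w)) (vlink (stellar T F v) w)"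
proof -
  let ?r = "\<lambda>a b. {a, b} \<in> vlink (stellar T F v) w"
  obtain y z where F: "F = {w, y, z}" "w \<noteq> y" "w \<noteq> z" "y \<noteq> z"
    using card_3_obtain_others[OF card_F assms] .
  have "?r y v" "?r v z" "?r z v" "?r v y"
    using vlink_stellar_corner_path[OF F] vlink_stellar_corner_path[of w z y] F
    by (auto simp: insert_commute)
  then have yz: "?r\<^sup>*\<^sup>* y z" "?r\<^sup>*\<^sup>* z y" and vy: "?r\<^sup>*\<^sup>* v y"
    by (meson converse_rtranclp_into_rtranclp r_into_rtranclp)+
  have "F - {w} = {y, z}"
    using F by auto
  show ?thesis
  proof (rule graph_connected_lift[OF connected_vlink])
    show "w \<in> verts T"
      using face assms unfolding verts_def by blast
  next
    fix a b assume "{a, b} \<in> vlink T w"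
    then obtain G where G: "G \<in> T" "w \<in> G" "{a, b} = G - {w}"
      unfolding vlink_def by blast
    show "?r\<^sup>*\<^sup>* a b"
    proof (cases "G = F")
      case True
      then have "{a, b} = {y, z}"
        using G(3) \<open>F - {w} = {y, z}\<close> by simp
      then show ?thesis
        using yz by (auto simp: doubleton_eq_iff)
    next
      case False
      then show ?thesis
        using vlink_stellar_keeps[OF G(1) False G(2)] G(3) by (simp add: r_into_rtranclp)
    qed
  next
    fix x assume "x \<in> \<Union>(vlink (stellar T F v) w)"
    moreover have "y \<in> \<Union>(vlink T w)"
      using \<open>F - {w} = {y, z}\<close> face assms unfolding vlink_def by blast
    ultimately show "\<exists>x'\<in>\<Union>(vlink T w). ?r\<^sup>*\<^sup>* x x'"
      using vlink_stellar_corner_verts[OF assms] vy by blast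
  qed
qed

lemma connected_stellar: "graph_connected (verts (stellar T F v)) (edges (stellar T F v))"
  unfolding verts_stellar
proof (rule graph_connected_lift[OF connected])
  fix x y assume "{x, y} \<in> edges T"
  then show "(\<lambda>a b. {a, b} \<in> edges (stellar T F v))\<^sup>*\<^sup>* x y"
    unfolding edges_stellar by (simp add: r_into_rtranclp)
next
  fix x assume x: "x \<in> insert v (verts T)"
  obtain y where "y \<in> F"
    using card_ge_2_obtain_other[of F] card_F by auto
  then have "y \<in> verts T" "{v, y} \<in> edges (stellar T F v)"
    using face unfolding verts_def edges_stellar by blast+
  then show "\<exists>y\<in>verts T. (\<lambda>a b. {a, b} \<in> edges (stellar T F v))\<^sup>*\<^sup>* x y"
    using x by (cases "x = v") (auto intro: r_into_rtranclp)
qed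

lemma euler_stellar:
  "int (card (verts (stellar T F v))) - int (card (edges (stellar T F v))) + int (card (stellar T F v)) = 2"
  using euler fresh finite_verts unfolding verts_stellar card_edges_stellar card_stellar by simp

lemma sphere_triangulation_stellar: "sphere_triangulation (stellar T F v)"
  unfolding sphere_triangulation_def
proof (intro conjI ballI)
  show "finite (stellar T F v)"
    unfolding stellar_def using finite_faces finite_F by blast
  show "stellar T F v \<noteq> {}"
    unfolding stellar_def using card_F by force
  show "card G = 3" if "G \<in> stellar T F v" for G
    using that card_face card_cone_face unfolding stellar_def by blast
  show "graph_connected (\<Union>(vlink (stellar T F v) w)) (vlink (stellar T F v) w)"
    if w: "w \<in> verts (stellar T F v)" for w
  proof -
    consider "w = v" | "w \<in> F" | "w \<in> verts T" "w \<notin> insert v F"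
      using w unfolding verts_stellar by blast
    then show ?thesis
      by cases (auto simp: connected_vlink_stellar_apex connected_vlink_stellar_corner
          vlink_stellar_away connected_vlink)
  qed
  show "card {G \<in> stellar T F v. e \<subseteq> G} = 2" if "e \<in> edges (stellar T F v)" for e
    using that by (rule edge_degree_stellar)
qed (fact connected_stellar euler_stellar)+

end

section \<open>Subdividing all faces of a stacked sphere\<close>

lemma inj_on_Diff_singleton: "inj_on (\<lambda>x. A - {x}) A"
  by (rule inj_onI) blast

definition simplex_boundary :: "nat set \<Rightarrow> triangulation" where
  "simplex_boundary V = (\<lambda>x. V - {x}) ` V"

context
  fixes V :: "nat set"
  assumes card_V: "card V = 4"
begin

lemma finite_simplex_vertices: "finite V"
  using card_V by (simp add: card_ge_0_finite)

lemma card_simplex_boundary: "card (simplex_boundary V) = 4"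
  unfolding simplex_boundary_def using card_image[OF inj_on_Diff_singleton[of V]] card_V by simp

lemma verts_simplex_boundary: "verts (simplex_boundary V) = V"
proof (intro equalityI subsetI)
  fix y assume "y \<in> V"
  moreover obtain x where "x \<in> V" "x \<noteq> y"
    using card_ge_2_obtain_other[of V] card_V by auto
  ultimately show "y \<in> verts (simplex_boundary V)"
    unfolding verts_def simplex_boundary_def by blast
qed (auto simp: verts_def simplex_boundary_def)

lemma card_Diff_simplex_edge: "e \<subseteq> V \<Longrightarrow> card e = 2 \<Longrightarrow> card (V - e) = 2"
  using card_V finite_simplex_vertices card_Diff_subset[of e V] finite_subset[of e V] by simp

lemma edges_simplex_boundary: "edges (simplex_boundary V) = {e. e \<subseteq> V \<and> card e = 2}"
proof (intro equalityI subsetI)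
  fix e assume e: "e \<in> {e. e \<subseteq> V \<and> card e = 2}"
  then have "card (V - e) = 2"
    using card_Diff_simplex_edge by blast
  then obtain x where "x \<in> V - e"
    using card_ge_2_obtain_other[of "V - e"] by auto
  then show "e \<in> edges (simplex_boundary V)"
    using e unfolding edges_def simplex_boundary_def by blast
qed (auto simp: edges_def simplex_boundary_def)

lemma faces_containing_simplex_boundary:
  "e \<subseteq> V \<Longrightarrow> {F \<in> simplex_boundary V. e \<subseteq> F} = (\<lambda>x. V - {x}) ` (V - e)"
  unfolding simplex_boundary_def by blast

lemma vlink_simplex_boundary_complete:
  assumes "w \<in> V" "x \<in> V - {w}" "y \<in> V - {w}" "x \<noteq> y"
  shows "{x, y} \<in> vlink (simplex_boundary V) w"
proof -
  have "card (V - {w}) = 3"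
    using card_V assms(1) finite_simplex_vertices by simp
  then obtain z where z: "V - {w} = {x, y, z}" "z \<noteq> x" "z \<noteq> y"
    using card_3_split assms(2-4) by metis
  then have "{x, y} = (V - {z}) - {w}" "z \<in> V" "w \<in> V - {z}"
    using assms by auto
  then show ?thesis
    unfolding vlink_def simplex_boundary_def by blast
qed

lemma sphere_triangulation_simplex_boundary: "sphere_triangulation (simplex_boundary V)"
  unfolding sphere_triangulation_def
proof (intro conjI ballI)
  show "finite (simplex_boundary V)"
    unfolding simplex_boundary_def using finite_simplex_vertices by simp
  show "simplex_boundary V \<noteq> {}"
    using card_simplex_boundary by auto
  show "card F = 3" if "F \<in> simplex_boundary V" for F
    using that card_V finite_simplex_vertices unfolding simplex_boundary_def by auto
  show "card {F \<in> simplex_boundary V. e \<subseteq> F} = 2" if "e \<in> edges (simplex_boundary V)" for e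
  proof -
    have e: "e \<subseteq> V" "card e = 2"
      using that unfolding edges_simplex_boundary by auto
    have "card {F \<in> simplex_boundary V. e \<subseteq> F} = card (V - e)"
      unfolding faces_containing_simplex_boundary[OF e(1)]
      by (rule card_image[OF inj_on_subset[OF inj_on_Diff_singleton]]) blast
    then show ?thesis
      using card_Diff_simplex_edge[OF e] by simp
  qed
  show "graph_connected (\<Union>(vlink (simplex_boundary V) w)) (vlink (simplex_boundary V) w)"
    if "w \<in> verts (simplex_boundary V)" for w
  proof (rule graph_connected_complete)
    fix x y assume "x \<in> \<Union>(vlink (simplex_boundary V) w)" "y \<in> \<Union>(vlink (simplex_boundary V) w)" "x \<noteq> y"
    moreover have "\<Union>(vlink (simplex_boundary V) w) \<subseteq> V - {w}"
      unfolding vlink_def simplex_boundary_def by blast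
    ultimately show "{x, y} \<in> vlink (simplex_boundary V) w"
      using that vlink_simplex_boundary_complete verts_simplex_boundary by blast
  qed
  show "graph_connected (verts (simplex_boundary V)) (edges (simplex_boundary V))"
    unfolding verts_simplex_boundary edges_simplex_boundary
    by (rule graph_connected_complete) (simp add: card_insert_if)
  have "card (edges (simplex_boundary V)) = 6"
    unfolding edges_simplex_boundary using n_subsets[OF finite_simplex_vertices, of 2] card_V
    by (simp add: numeral_eq_Suc conj_commute)
  then show "int (card (verts (simplex_boundary V))) - int (card (edges (simplex_boundary V)))
      + int (card (simplex_boundary V)) = 2"
    using card_simplex_boundary verts_simplex_boundary card_V by simp
qed

end

primrec stellar_iter :: "triangulation \<Rightarrow> nat set list \<Rightarrow> nat \<Rightarrow> triangulation" where
  "stellar_iter T [] n = T"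
| "stellar_iter T (F # Fs) n = stellar_iter (stellar T F n) Fs (Suc n)"

lemma stellar_keeps_faces: "G \<in> T \<Longrightarrow> G \<noteq> F \<Longrightarrow> G \<in> stellar T F v"
  unfolding stellar_def by blast

lemma sphere_triangulation_stellar_iter:
  assumes "sphere_triangulation T" "distinct Fs" "set Fs \<subseteq> T" "verts T \<subseteq> {..<n}"
  shows "sphere_triangulation (stellar_iter T Fs n)
    \<and> card (stellar_iter T Fs n) = card T + 2 * length Fs
    \<and> verts (stellar_iter T Fs n) = verts T \<union> {n..<n + length Fs}
    \<and> edges T \<subseteq> edges (stellar_iter T Fs n)"
  using assms
proof (induction Fs arbitrary: T n)
  case (Cons F Fs)
  interpret stellar_subdivision T F n
    using Cons.prems by unfold_locales auto
  have "set Fs \<subseteq> stellar T F n"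
    using Cons.prems(2,3) by (auto intro: stellar_keeps_faces)
  moreover have "verts (stellar T F n) \<subseteq> {..<Suc n}"
    using Cons.prems(4) verts_stellar by auto
  ultimately have IH: "sphere_triangulation (stellar_iter T (F # Fs) n)
      \<and> card (stellar_iter T (F # Fs) n) = card (stellar T F n) + 2 * length Fs
      \<and> verts (stellar_iter T (F # Fs) n) = verts (stellar T F n) \<union> {Suc n..<Suc n + length Fs}
      \<and> edges (stellar T F n) \<subseteq> edges (stellar_iter T (F # Fs) n)"
    using Cons.IH sphere_triangulation_stellar Cons.prems(2) by simp
  moreover have "insert n (verts T) \<union> {Suc n..<Suc n + length Fs} = verts T \<union> {n..<n + length (F # Fs)}"
    by auto
  ultimately show ?case
    using card_stellar verts_stellar edges_stellar by auto
qed simp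

lemma stellar_iter_opposite_edges:
  assumes "\<forall>G\<in>T. \<forall>x\<in>G - R. G - {x} \<in> S" "distinct Fs" "set Fs \<subseteq> T" "R \<subseteq> {..<n}"
    and "\<forall>F\<in>set Fs. F \<subseteq> R \<and> (\<forall>y\<in>F. F - {y} \<in> S)"
  shows "\<forall>G\<in>stellar_iter T Fs n. \<forall>x\<in>G - R. G - {x} \<in> S"
  using assms
proof (induction Fs arbitrary: T n)
  case (Cons F Fs)
  have "\<forall>G\<in>stellar T F n. \<forall>x\<in>G - R. G - {x} \<in> S"
  proof (intro ballI)
    fix G x assume G: "G \<in> stellar T F n" and x: "x \<in> G - R"
    show "G - {x} \<in> S"
    proof (cases "G \<in> T - {F}")
      case True
      then show ?thesis
        using Cons.prems(1) x by blast
    next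
      case False
      then obtain y where "y \<in> F" "G = insert n (F - {y})"
        using G unfolding stellar_def by blast
      moreover have "F \<subseteq> R" "n \<notin> R"
        using Cons.prems(4,5) by auto
      ultimately have "G - {x} = F - {y}"
        using x by blast
      then show ?thesis
        using Cons.prems(5) \<open>y \<in> F\<close> by simp
    qed
  qed
  moreover have "set Fs \<subseteq> stellar T F n"
    using Cons.prems(2,3) by (auto intro: stellar_keeps_faces)
  moreover have "R \<subseteq> {..<Suc n}"
    using Cons.prems(4) by auto
  ultimately show ?case
    using Cons.IH[of "stellar T F n" "Suc n"] Cons.prems(2,5) by simp
qed simp

text \<open>Any enumeration of the faces will do: it only determines the labels of the new vertices.\<close>
definition subdivide_faces :: "triangulation \<Rightarrow> nat \<Rightarrow> triangulation" where
  "subdivide_faces T n = stellar_iter T (SOME Fs. set Fs = T \<and> distinct Fs) n"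

lemma subdivide_faces_stellar_iter:
  assumes "finite T"
  obtains Fs where "subdivide_faces T n = stellar_iter T Fs n" "set Fs = T" "distinct Fs"
proof -
  have "\<exists>Fs. set Fs = T \<and> distinct Fs"
    using finite_distinct_list[OF assms] .
  then show thesis
    using that unfolding subdivide_faces_def by (metis (mono_tags, lifting) someI_ex)
qed

context
  fixes T :: triangulation and n :: nat
  assumes sphere: "sphere_triangulation T" and fresh: "verts T \<subseteq> {..<n}"
begin

lemma sphere_triangulation_subdivide_faces: "sphere_triangulation (subdivide_faces T n)"
  and card_subdivide_faces: "card (subdivide_faces T n) = 3 * card T"
  and verts_subdivide_faces: "verts (subdivide_faces T n) = verts T \<union> {n..<n + card T}"
  and edges_subset_subdivide_faces: "edges T \<subseteq> edges (subdivide_faces T n)"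
proof -
  obtain Fs where Fs: "subdivide_faces T n = stellar_iter T Fs n" "set Fs = T" "distinct Fs"
    using subdivide_faces_stellar_iter sphere unfolding sphere_triangulation_def by metis
  then have "length Fs = card T"
    using distinct_card by fastforce
  then show "sphere_triangulation (subdivide_faces T n)" "card (subdivide_faces T n) = 3 * card T"
    "verts (subdivide_faces T n) = verts T \<union> {n..<n + card T}" "edges T \<subseteq> edges (subdivide_faces T n)"
    using sphere_triangulation_stellar_iter[OF sphere Fs(3) _ fresh] Fs by simp_all
qed

lemma card_verts_subdivide_faces: "card (verts (subdivide_faces T n)) = card (verts T) + card T"
proof -
  have "verts T \<inter> {n..<n + card T} = {}"
    using fresh by auto
  then show ?thesis
    unfolding verts_subdivide_faces using sphere_triangulation_finite_verts[OF sphere]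
    by (simp add: card_Un_disjoint)
qed

lemma subdivide_faces_opposite_edges:
  "\<forall>G\<in>subdivide_faces T n. \<forall>x\<in>G - verts T. G - {x} \<in> edges T"
proof -
  obtain Fs where Fs: "subdivide_faces T n = stellar_iter T Fs n" "set Fs = T" "distinct Fs"
    using subdivide_faces_stellar_iter sphere unfolding sphere_triangulation_def by metis
  have "\<forall>F\<in>T. F \<subseteq> verts T \<and> (\<forall>y\<in>F. F - {y} \<in> edges T)"
    using sphere unfolding sphere_triangulation_def verts_def edges_def by auto
  then show ?thesis
    using stellar_iter_opposite_edges[of T "verts T" "edges T" Fs n] Fs fresh
    unfolding verts_def by auto
qed

lemma not_delaunay_realizable_subdivide_faces:
  assumes "3 * card (verts T) < 2 * card T + 2"
  shows "\<not> delaunay_realizable (subdivide_faces T n)"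
proof (rule not_delaunay_realizable_angle_count)
  show "finite (subdivide_faces T n)" "\<forall>F\<in>subdivide_faces T n. card F = 3"
    using sphere_triangulation_subdivide_faces unfolding sphere_triangulation_def by auto
  show "finite (verts T)" "finite (edges T)"
    using sphere by (fact sphere_triangulation_finite_verts sphere_triangulation_finite_edges)+
  show "verts T \<subseteq> verts (subdivide_faces T n)" "edges T \<subseteq> edges (subdivide_faces T n)"
    using verts_subdivide_faces edges_subset_subdivide_faces by auto
  show "\<forall>G\<in>subdivide_faces T n. \<forall>x\<in>G - verts T. G - {x} \<in> edges T"
    by (fact subdivide_faces_opposite_edges)
  have "int (card (edges T)) = int (card (verts T)) + int (card T) - 2"
    using sphere unfolding sphere_triangulation_def by linarith
  then show "card (edges T) + 2 * card (verts T) < card (subdivide_faces T n)"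
    using assms card_subdivide_faces by linarith
qed

end

primrec stacked :: "nat \<Rightarrow> triangulation" where
  "stacked 0 = simplex_boundary {..<4}"
| "stacked (Suc k) = stellar (stacked k) {0, 1, k + 3} (k + 4)"

lemma sphere_triangulation_stacked:
  "sphere_triangulation (stacked k) \<and> verts (stacked k) = {..<k + 4} \<and> card (stacked k) = 2 * k + 4
    \<and> {0, 1, k + 3} \<in> stacked k"
proof (induction k)
  case 0
  have "{0, 1, 3} = {..<4::nat} - {2}"
    by auto
  then have "{0, 1, 3} \<in> simplex_boundary {..<4}"
    unfolding simplex_boundary_def by auto
  then show ?case
    using sphere_triangulation_simplex_boundary verts_simplex_boundary card_simplex_boundary by simp
next
  case (Suc k)
  interpret stellar_subdivision "stacked k" "{0, 1, k + 3}" "k + 4"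
    using Suc by unfold_locales auto
  have "insert (k + 4) ({0, 1, k + 3} - {k + 3}) \<in> stacked (Suc k)"
    unfolding stacked.simps stellar_def by blast
  moreover have "insert (k + 4) ({0, 1, k + 3} - {k + 3}) = {0, 1, Suc k + 3}"
    by auto
  moreover have "insert (k + 4) {..<k + 4} = {..<Suc k + 4}"
    by auto
  ultimately show ?case
    using Suc sphere_triangulation_stellar verts_stellar card_stellar by simp
qed

lemma comb_equiv_card_verts: "comb_equiv T T' \<Longrightarrow> card (verts T) = card (verts T')"
  unfolding comb_equiv_def using bij_betw_same_card by blast

theorem theorem9p1:
  shows "\<exists>\<T> :: triangulation set.
           infinite \<T> \<and>
           (\<forall>T\<in>\<T>. sphere_triangulation T \<and> \<not> delaunay_realizable T) \<and>
           (\<forall>T\<in>\<T>. \<forall>T'\<in>\<T>. T \<noteq> T' \<longrightarrow> \<not> comb_equiv T T')"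
proof (intro exI conjI)
  define D where "D k = subdivide_faces (stacked (k + 3)) (k + 7)" for k
  have "sphere_triangulation (D k)" and "\<not> delaunay_realizable (D k)"
    and card_verts: "card (verts (D k)) = 3 * k + 17" for k
    using sphere_triangulation_stacked[of "k + 3"] sphere_triangulation_subdivide_faces
      not_delaunay_realizable_subdivide_faces card_verts_subdivide_faces
    unfolding D_def by auto
  then show "\<forall>T\<in>range D. sphere_triangulation T \<and> \<not> delaunay_realizable T"
    by blast
  have "inj D"
    by (rule injI) (metis card_verts add_right_cancel mult_left_cancel zero_neq_numeral)
  then show "infinite (range D)"
    using finite_imageD by blast
  show "\<forall>T\<in>range D. \<forall>T'\<in>range D. T \<noteq> T' \<longrightarrow> \<not> comb_equiv T T'"
  proof (intro ballI impI)
    fix T T' assume "T \<in> range D" "T' \<in> range D" "T \<noteq> T'"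
    then obtain i j where "T = D i" "T' = D j" "i \<noteq> j"
      by blast
    then show "\<not> comb_equiv T T'"
      using comb_equiv_card_verts card_verts by fastforce
  qed
qed

end
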